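(* Let $d_X, d_Y \ge 1$ and let $\mathcal{F}:\mathbb{R}^{d_X}\to\mathbb{R}^{d_Y}$ be a linear function, $\mathcal{F}(x)=xA$ for a matrix $A\in\mathbb{R}^{d_X\times d_Y}$ (vectors are row vectors). Let $y_1,\dots,y_M\in\mathbb{R}^{d_Y}$ be desired outputs and $x_1^0,\dots,x_M^0\in\mathbb{R}^{d_X}$ arbitrary initial inputs, and run Iterative Inversion with affine least-squares regression as described in the context. If $\operatorname{rank}\big(\mathcal{F}(X^0)-\mathbf{1}\,\overline{\mathcal{F}(X^0)}\big)=d_Y$, then the algorithm converges in one iteration, i.e. $\mathcal{F}(x_i^1)=y_i$ for all $i=1,\dots,M$.
   Context: Iterative Inversion (affine least-squares version). Given desired outputs $y_1,\dots,y_M$ and current inputs $x_1^n,\dots,x_M^n$, form the matrices $X^n=(x_1^n,\dots,x_M^n)^T\in\mathbb{R}^{M\times d_X}$, $\mathcal{F}(X^n)=(\mathcal{F}(x_1^n),\dots,\mathcal{F}(x_M^n))^T\in\mathbb{R}^{M\times d_Y}$, $Y=(y_1,\dots,y_M)^T$, and the row means $\overline{X^n}=\frac1M\sum_i x_i^n$, $\overline{\mathcal{F}(X^n)}=\frac1M\sum_i\mathcal{F}(x_i^n)$, $\overline{Y}=\frac1M\sum_i y_i$; $\mathbf{1}$ denotes the all-ones column vector of length $M$, so $\mathbf{1}u$ repeats the row vector $u$ in each row. The regression step fits an affine map $\mathcal{G}_{\Theta,b}(y)=y\Theta+b$ ($\Theta\in\mathbb{R}^{d_Y\times d_X}$, $b\in\mathbb{R}^{1\times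 d_X}$) by $(\Theta_{n+1},b_{n+1})\in\arg\min_{\Theta,b}\|\mathcal{F}(X^n)\Theta+\mathbf{1}b-X^n\|_F^2$, taking the minimum-norm solution $\Theta_{n+1}=(\mathcal{F}(X^n)-\mathbf{1}\overline{\mathcal{F}(X^n)})^{\dagger}(X^n-\mathbf{1}\overline{X^n})$, $b_{n+1}=\overline{X^n}-\overline{\mathcal{F}(X^n)}\Theta_{n+1}$, where $\dagger$ is the Moore–Penrose pseudoinverse. The new inputs are $x_i^{n+1}=\mathcal{G}_{\Theta_{n+1},b_{n+1}}(y_i)=y_i\Theta_{n+1}+b_{n+1}$. *)

theory Defs
  imports "HOL-Analysis.Analysis"
begin

definition pinv :: "real^'n^'m \<Rightarrow> real^'m^'n" where
  "pinv A = (THE B. A ** B ** A = A \<and> B ** A ** B = B \<and>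
                     transpose (A ** B) = A ** B \<and> transpose (B ** A) = B ** A)"

definition row_mean :: "real^'d^'m \<Rightarrow> real^'d" where
  "row_mean Z = inverse (real CARD('m)) *\<^sub>R (\<Sum>i\<in>UNIV. Z $ i)"

definition centered :: "real^'d^'m \<Rightarrow> real^'d^'m" where
  "centered Z = (\<chi> i. Z $ i - row_mean Z)"

text \<open>Affine least-squares regression step (minimum-norm solution).\<close>
definition ls_Theta :: "real^'x^'m \<Rightarrow> real^'y^'m \<Rightarrow> real^'x^'y" where
  "ls_Theta X FX = pinv (centered FX) ** centered X"

definition ls_b :: "real^'x^'m \<Rightarrow> real^'y^'m \<Rightarrow> real^'x" where
  "ls_b X FX = row_mean X - row_mean FX v* ls_Theta X FX"

text \<open>One step of Iterative Inversion: F is given by F(x) = x A (row vectors);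
  rows of X are the current inputs x_i^n, rows of Y the desired outputs y_i.\<close>
definition iter_inv_step :: "real^'y^'x \<Rightarrow> real^'y^'m \<Rightarrow> real^'x^'m \<Rightarrow> real^'x^'m" where
  "iter_inv_step A Y X =
     (let FX = X ** A; \<Theta> = ls_Theta X FX; b = ls_b X FX
      in (\<chi> i. Y $ i v* \<Theta> + b))"

end

theory Submission
  imports Defs
begin

text \<open>Since \<open>\<F>\<close> is linear, centring commutes with it: the centred outputs are
  \<open>C A\<close> with \<open>C\<close> the centred inputs, so the regression matrix is
  \<open>\<Theta> = (C A)\<^sup>\<dagger> C\<close> and \<open>\<Theta> A = (C A)\<^sup>\<dagger> (C A)\<close>. Full column rank of \<open>C A\<close>
  makes its pseudoinverse a left inverse, so \<open>\<Theta> A = I\<close>; the intercept is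
  then mapped to \<open>mean(X) A - mean(X) A \<Theta> A = 0\<close>, and every new input
  \<open>y\<^sub>i \<Theta> + b\<close> is sent to \<open>y\<^sub>i\<close>.\<close>

definition penrose :: "real^'n^'m \<Rightarrow> real^'m^'n \<Rightarrow> bool" where
  "penrose A B \<longleftrightarrow> A ** B ** A = A \<and> B ** A ** B = B \<and>
                     transpose (A ** B) = A ** B \<and> transpose (B ** A) = B ** A"

lemma penrose_transpose:
  assumes "penrose A B"
  shows "penrose (transpose A) (transpose B)"
proof -
  have "transpose A ** transpose B ** transpose A = transpose (A ** B ** A)"
    and "transpose B ** transpose A ** transpose B = transpose (B ** A ** B)"
    by (simp_all add: matrix_transpose_mul matrix_mul_assoc)
  with assms show ?thesis
    unfolding penrose_def by (simp add: matrix_transpose_mul)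
qed

lemma penrose_absorb:
  assumes "penrose A B1" and "penrose A B2"
  shows "B1 = B1 ** A ** B2"
proof -
  from assms have a1: "A ** B1 ** A = A" and b1: "B1 ** A ** B1 = B1"
    and c1: "transpose (A ** B1) = A ** B1"
    and a2: "A ** B2 ** A = A" and c2: "transpose (A ** B2) = A ** B2"
    by (auto simp: penrose_def)
  have "B1 = B1 ** (A ** B1)" using b1 by (simp add: matrix_mul_assoc)
  also have "\<dots> = B1 ** ((A ** B2) ** (A ** B1))" using a2 by (simp add: matrix_mul_assoc)
  also have "\<dots> = B1 ** transpose (A ** B1 ** A ** B2)"
    using c1 c2 by (simp add: matrix_transpose_mul matrix_mul_assoc)
  also have "\<dots> = B1 ** A ** B2"
    using a1 c2 by (simp add: matrix_mul_assoc)
  finally show ?thesis .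
qed

text \<open>The second half of uniqueness is the first one for the transposed equations.\<close>

lemma penrose_unique:
  assumes "penrose A B1" and "penrose A B2"
  shows "B1 = B2"
proof -
  have "transpose B2 = transpose B2 ** transpose A ** transpose B1"
    using assms by (intro penrose_absorb penrose_transpose)
  then have "transpose (transpose B2) = transpose (transpose B2 ** transpose A ** transpose B1)"
    by (rule arg_cong)
  then have "B2 = B1 ** A ** B2"
    by (simp add: matrix_transpose_mul matrix_mul_assoc)
  with penrose_absorb[OF assms] show ?thesis by simp
qed

lemma pinv_eqI:
  assumes "penrose A B"
  shows "pinv A = B"
proof -
  have "pinv A = (THE B. penrose A B)"
    by (simp add: pinv_def penrose_def)
  also have "\<dots> = B"
    by (rule the_equality) (fact assms, rule penrose_unique[OF _ assms])
  finally show ?thesis .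
qed

lemma gram_matrix_left_invertible:
  fixes C :: "real^'n^'m"
  assumes "rank C = CARD('n)"
  shows "\<exists>H. H ** (transpose C ** C) = mat 1"
  unfolding matrix_left_invertible_ker
proof (intro allI impI)
  fix x assume "(transpose C ** C) *v x = 0"
  then have "x \<bullet> ((transpose C ** C) *v x) = 0" by simp
  then have "(C *v x) \<bullet> (C *v x) = 0"
    by (simp add: matrix_vector_mul_assoc[symmetric] dot_lmul_matrix[symmetric] inner_commute)
  then have "C *v x = C *v 0" by simp
  with assms show "x = 0" by (metis full_rank_injective injD)
qed

lemma left_inverse_symmetric:
  fixes G H :: "real^'n^'n"
  assumes "transpose G = G" and "H ** G = mat 1"
  shows "transpose H = H"
proof -
  have "G ** H = mat 1" using assms(2) matrix_left_right_inverse by blast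
  then have "transpose H ** G = mat 1"
    using assms(1) by (metis matrix_transpose_mul transpose_mat)
  have "transpose H = transpose H ** (G ** H)"
    using \<open>G ** H = mat 1\<close> by simp
  also have "\<dots> = (transpose H ** G) ** H"
    by (rule matrix_mul_assoc)
  also have "\<dots> = H" using \<open>transpose H ** G = mat 1\<close> by simp
  finally show ?thesis .
qed
text \<open>For full column rank the pseudoinverse is \<open>(C\<^sup>T C)\<^sup>-\<^sup>1 C\<^sup>T\<close>.\<close>

lemma pinv_left_inverse:
  fixes C :: "real^'n^'m"
  assumes "rank C = CARD('n)"
  shows "pinv C ** C = mat 1"
proof -
  obtain H where H: "H ** (transpose C ** C) = mat 1"
    using gram_matrix_left_invertible[OF assms] by blast
  then have "transpose H = H"
    by (rule left_inverse_symmetric[rotated]) (simp add: matrix_transpose_mul)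
  define B where "B = H ** transpose C"
  have BC: "B ** C = mat 1" using H by (simp add: B_def matrix_mul_assoc)
  have "penrose C B"
    unfolding penrose_def
  proof (intro conjI)
    show "C ** B ** C = C" using BC by (metis matrix_mul_assoc matrix_mul_rid)
    show "B ** C ** B = B" using BC by simp
    show "transpose (C ** B) = C ** B"
      using \<open>transpose H = H\<close> by (simp add: B_def matrix_transpose_mul matrix_mul_assoc)
    show "transpose (B ** C) = B ** C" using BC by simp
  qed
  then show ?thesis using BC by (simp add: pinv_eqI)
qed

lemma matrix_matrix_mult_row: "(X ** A) $ i = X $ i v* A"
  by (simp add: matrix_matrix_mult_def vector_matrix_mult_def vec_eq_iff mult.commute)

lemma sum_vector_matrix_mult: "(\<Sum>i\<in>S. f i) v* A = (\<Sum>i\<in>S. f i v* A)"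
  by (simp add: vec_eq_iff vector_matrix_mult_def sum_component sum_distrib_right
      sum.swap[of _ UNIV S])

lemma row_mean_mult: "row_mean (X ** A) = row_mean X v* A"
  unfolding row_mean_def
  by (simp add: matrix_matrix_mult_row sum_vector_matrix_mult scaleR_vector_matrix_assoc)

lemma centered_mult: "centered (X ** A) = centered X ** A"
  by (simp add: centered_def vec_eq_iff matrix_matrix_mult_row row_mean_mult
      vector_matrix_mult_diff_distrib)

lemma ls_Theta_right_inverse:
  fixes A :: "real^'y^'x"
  assumes "rank (centered (X ** A)) = CARD('y)"
  shows "ls_Theta X (X ** A) ** A = mat 1"
  using pinv_left_inverse[OF assms] by (simp add: ls_Theta_def matrix_mul_assoc centered_mult)

lemma ls_b_vanishes:
  assumes "ls_Theta X (X ** A) ** A = mat 1"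
  shows "ls_b X (X ** A) v* A = 0"
  using assms
  by (simp add: ls_b_def row_mean_mult vector_matrix_mult_diff_distrib vector_matrix_mul_assoc
      flip: matrix_mul_assoc)

theorem theorem1:
  fixes A :: "real^'y^'x" and Y :: "real^'y^'m" and X0 :: "real^'x^'m"
  assumes "rank (centered (X0 ** A)) = CARD('y)"
  shows "\<forall>i. (iter_inv_step A Y X0 $ i) v* A = Y $ i"
proof
  fix i
  let ?\<Theta> = "ls_Theta X0 (X0 ** A)" and ?b = "ls_b X0 (X0 ** A)"
  have \<Theta>A: "?\<Theta> ** A = mat 1" using ls_Theta_right_inverse[OF assms] .
  have "(iter_inv_step A Y X0 $ i) v* A = Y $ i v* (?\<Theta> ** A) + ?b v* A"
    by (simp add: iter_inv_step_def Let_def vector_matrix_left_distrib vector_matrix_mul_assoc)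
  also have "\<dots> = Y $ i" using \<Theta>A ls_b_vanishes[OF \<Theta>A] by simp
  finally show "(iter_inv_step A Y X0 $ i) v* A = Y $ i" .
qed

end
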